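(* Let $N\ge1$, $\Psi_N$, $\Lambda_N$, $J_N$ be as follows: $(\Psi_N)_{jk}=\binom{j}{k}$ for $0\le j,k<N$; $\Lambda_N=\mathrm{diag}(1,-1,\dots,(-1)^{N-1})$; $J_N$ is the symmetric tridiagonal matrix with $(J_N)_{kk}=k(2k^2+3k+2-N^2)$ and $(J_N)_{k,k+1}=(J_N)_{k+1,k}=(k+1)(N^2-(k+1)^2)$. If $\vec v$ is an eigenvector of $J_N$ with eigenvalue $\lambda$, then $\Psi_N\Lambda_N\vec v$ (the signed binomial transform $w_j=\sum_{k=0}^{N-1}\binom{j}{k}(-1)^kv_k$) is an eigenvector of $J_N$ with eigenvalue $N^2-1-\lambda$. In particular, the spectrum of $J_N$ is invariant under $\lambda\mapsto N^2-1-\lambda$.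
   Context: Matrix indices start at $0$. *)

theory Defs
  imports Complex_Main "Jordan_Normal_Form.Char_Poly"
begin

definition Psi_mat :: "nat \<Rightarrow> complex mat" where
  "Psi_mat N = mat N N (\<lambda>(j, k). of_nat (j choose k))"

definition Lambda_mat :: "nat \<Rightarrow> complex mat" where
  "Lambda_mat N = mat N N (\<lambda>(j, k). if j = k then (-1) ^ k else 0)"

definition J_mat :: "nat \<Rightarrow> complex mat" where
  "J_mat N = mat N N (\<lambda>(j, k).
     if j = k then of_int (int k * (2 * int k ^ 2 + 3 * int k + 2 - int N ^ 2))
     else if k = j + 1 then of_int ((int j + 1) * (int N ^ 2 - (int j + 1) ^ 2))
     else if j = k + 1 then of_int ((int k + 1) * (int N ^ 2 - (int k + 1) ^ 2))
     else 0)"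

end

theory Submission
  imports Defs
begin

text \<open>
  Put \<open>S = \<Psi>\<^sub>N \<Lambda>\<^sub>N\<close>, so \<open>S\<^sub>j\<^sub>k = (-1)\<^sup>k (j choose k)\<close>. Everything follows from the
  anticommutation relation \<open>J S + S J = (N\<^sup>2 - 1) S\<close>: if \<open>J v = \<lambda> v\<close> then
  \<open>J (S v) = (N\<^sup>2 - 1) S v - S (J v) = (N\<^sup>2 - 1 - \<lambda>) S v\<close>, and \<open>S v \<noteq> 0\<close> since \<open>S\<close> is
  lower triangular with diagonal entries \<open>\<plusminus>1\<close>. Because \<open>J\<close> is tridiagonal, the
  \<open>(j, k)\<close> entry of the relation is a six-term identity between binomial coefficients. It is
  proved for generalised binomial coefficients \<open>x gchoose k\<close>, where it lies in the ideal
  generated by the absorption identities and Pascal's rule, so no case distinction on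
  \<open>k \<le> j\<close> is needed.
\<close>

lemma smult_mat_mult_vec:
  assumes "A \<in> carrier_mat nr nc" and "v \<in> carrier_vec nc"
  shows "(c \<cdot>\<^sub>m A) *\<^sub>v v = c \<cdot>\<^sub>v (A *\<^sub>v (v :: 'a :: comm_semiring_0 vec))"
  using assms by (intro eq_vecI) (auto simp: scalar_prod_def sum_distrib_left mult.assoc)

lemma eigenvector_mult_vec_anticommuting:
  fixes A P :: "'a :: field mat"
  assumes A: "A \<in> carrier_mat n n" and P: "P \<in> carrier_mat n n" and "det P \<noteq> 0"
    and anticomm: "A * P + P * A = c \<cdot>\<^sub>m P"
    and "eigenvector A v lam"
  shows "eigenvector A (P *\<^sub>v v) (c - lam)"
proof -
  have v: "v \<in> carrier_vec n" and "v \<noteq> 0\<^sub>v n" and Av: "A *\<^sub>v v = lam \<cdot>\<^sub>v v"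
    using \<open>eigenvector A v lam\<close> A by (auto simp: eigenvector_def)
  have Pv: "P *\<^sub>v v \<in> carrier_vec n" using P v by simp
  have "P *\<^sub>v v \<noteq> 0\<^sub>v n"
    using det_0_iff_vec_prod_zero[OF P] \<open>det P \<noteq> 0\<close> v \<open>v \<noteq> 0\<^sub>v n\<close> by blast
  have "A *\<^sub>v (P *\<^sub>v v) + lam \<cdot>\<^sub>v (P *\<^sub>v v) = A *\<^sub>v (P *\<^sub>v v) + P *\<^sub>v (A *\<^sub>v v)"
    using P v by (simp add: Av mult_mat_vec)
  also have "\<dots> = (A * P + P * A) *\<^sub>v v"
    using A P v by (simp add: add_mult_distrib_mat_vec[of _ n n])
  also have "\<dots> = c \<cdot>\<^sub>v (P *\<^sub>v v)"
    using P v by (simp add: anticomm smult_mat_mult_vec)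
  finally have sum: "A *\<^sub>v (P *\<^sub>v v) + lam \<cdot>\<^sub>v (P *\<^sub>v v) = c \<cdot>\<^sub>v (P *\<^sub>v v)" .
  have "A *\<^sub>v (P *\<^sub>v v) = (c - lam) \<cdot>\<^sub>v (P *\<^sub>v v)"
  proof (rule eq_vecI)
    fix i assume "i < dim_vec ((c - lam) \<cdot>\<^sub>v (P *\<^sub>v v))"
    then have i: "i < n" using P by simp
    have "(A *\<^sub>v (P *\<^sub>v v)) $ i + lam * (P *\<^sub>v v) $ i = c * (P *\<^sub>v v) $ i"
      using arg_cong[OF sum, of "\<lambda>w. w $ i"] i A P by simp
    then show "(A *\<^sub>v (P *\<^sub>v v)) $ i = ((c - lam) \<cdot>\<^sub>v (P *\<^sub>v v)) $ i"
      using i P by (simp add: algebra_simps)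
  qed (use A P in simp)
  then show ?thesis
    using Pv \<open>P *\<^sub>v v \<noteq> 0\<^sub>v n\<close> A by (simp add: eigenvector_def)
qed

lemma eigenvalue_reflect_iff_anticommuting:
  fixes A P :: "'a :: field mat"
  assumes "A \<in> carrier_mat n n" and "P \<in> carrier_mat n n" and "det P \<noteq> 0"
    and "A * P + P * A = c \<cdot>\<^sub>m P"
  shows "eigenvalue A (c - \<mu>) \<longleftrightarrow> eigenvalue A \<mu>"
proof
  assume "eigenvalue A (c - \<mu>)"
  then obtain v where "eigenvector A v (c - \<mu>)" unfolding eigenvalue_def ..
  from eigenvector_mult_vec_anticommuting[OF assms this] show "eigenvalue A \<mu>"
    unfolding eigenvalue_def by auto
next
  assume "eigenvalue A \<mu>"
  then obtain v where "eigenvector A v \<mu>" unfolding eigenvalue_def ..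
  from eigenvector_mult_vec_anticommuting[OF assms this] show "eigenvalue A (c - \<mu>)"
    unfolding eigenvalue_def ..
qed

text \<open>\<open>s\<close> plays the role of \<open>N\<^sup>2\<close>; the entry \<open>(J\<^sub>N)\<^sub>k\<^sub>,\<^sub>k\<^sub>+\<^sub>1\<close> is \<open>J_offdiag (N\<^sup>2) (k + 1)\<close>.\<close>

definition J_diag :: "'a :: comm_ring_1 \<Rightarrow> 'a \<Rightarrow> 'a" where
  "J_diag s x = x * (2 * x\<^sup>2 + 3 * x + 2 - s)"

definition J_offdiag :: "'a :: comm_ring_1 \<Rightarrow> 'a \<Rightarrow> 'a" where
  "J_offdiag s x = x * (s - x\<^sup>2)"

lemma J_offdiag_0 [simp]: "J_offdiag s 0 = 0"
  by (simp add: J_offdiag_def)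

lemma gbinomial_J_anticommute:
  fixes x s :: "'a :: field_char_0"
  shows "J_offdiag s x * ((x - 1) gchoose k) + J_diag s x * (x gchoose k)
       + J_offdiag s (x + 1) * ((x + 1) gchoose k) + J_diag s (of_nat k) * (x gchoose k)
     = (s - 1) * (x gchoose k) + J_offdiag s (of_nat k) * (x gchoose (k - 1))
       + J_offdiag s (of_nat k + 1) * (x gchoose (k + 1))"
proof (cases k)
  case 0
  then show ?thesis by (simp add: J_diag_def J_offdiag_def algebra_simps power2_eq_square)
next
  case (Suc m)
  have "(x - (of_nat m + 1)) * (x gchoose Suc m) = x * ((x - 1) gchoose Suc m)"
    using gbinomial_absorb_comp[of x "Suc m"] by (simp add: add.commute)
  moreover have "(of_nat m + 2) * (x gchoose Suc (Suc m)) = x * ((x - 1) gchoose Suc m)"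
    using gbinomial_absorption[of "Suc m" x] by (simp add: add.commute)
  moreover have "(x + 1) gchoose Suc m = (x gchoose m) + (x gchoose Suc m)"
    by (rule gbinomial_Suc_Suc)
  moreover have "(of_nat m + 1) * (x gchoose Suc m) = x * ((x - 1) gchoose m)"
    using gbinomial_absorption[of m x] by (simp add: add.commute)
  moreover have "(x - of_nat m) * (x gchoose m) = x * ((x - 1) gchoose m)"
    by (rule gbinomial_absorb_comp)
  \<comment> \<open>The Groebner basis method of HOL; HOL-Algebra rebinds the short name \<open>algebra\<close>\<close>
  ultimately show ?thesis
    unfolding Suc J_diag_def J_offdiag_def by simp Groebner_Basis.algebra
qed

abbreviation (input) sq :: "nat \<Rightarrow> complex" where
  "sq N \<equiv> of_nat N ^ 2"

lemma J_mat_carrier: "J_mat N \<in> carrier_mat N N"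
  by (simp add: J_mat_def)

lemma J_mat_entry:
  assumes "j < N" and "k < N"
  shows "J_mat N $$ (j, k) =
    (if j = k then J_diag (sq N) (of_nat k)
     else if k = j + 1 then J_offdiag (sq N) (of_nat k)
     else if j = k + 1 then J_offdiag (sq N) (of_nat j)
     else 0)"
  using assms by (simp add: J_mat_def J_diag_def J_offdiag_def algebra_simps)

lemma J_mat_symmetric: "j < N \<Longrightarrow> k < N \<Longrightarrow> J_mat N $$ (j, k) = J_mat N $$ (k, j)"
  by (auto simp: J_mat_entry)

lemma J_offdiag_mult_pred:
  fixes s :: "'a :: comm_ring_1" and f :: "'a \<Rightarrow> 'a"
  shows "J_offdiag s (of_nat i) * f (of_nat (i - 1)) = J_offdiag s (of_nat i) * f (of_nat i - 1)"
  by (cases i) simp_all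

text \<open>The out-of-range neighbours \<open>g (0 - 1)\<close> and \<open>g N\<close> carry the weights
  \<open>J_offdiag (N\<^sup>2) 0 = J_offdiag (N\<^sup>2) N = 0\<close>.\<close>

lemma J_mat_row_sum:
  fixes g :: "nat \<Rightarrow> complex"
  assumes i: "i < N"
  shows "(\<Sum>l = 0..<N. J_mat N $$ (i, l) * g l) =
     J_offdiag (sq N) (of_nat i) * g (i - 1) + J_diag (sq N) (of_nat i) * g i
     + J_offdiag (sq N) (of_nat i + 1) * g (i + 1)"
proof -
  have "(\<Sum>l = 0..<N. J_mat N $$ (i, l) * g l) =
     (\<Sum>l = 0..<N. (if l = i then J_diag (sq N) (of_nat i) * g i else 0)
        + (if l = i + 1 then J_offdiag (sq N) (of_nat i + 1) * g (i + 1) else 0)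
        + (if l = i - 1 \<and> 0 < i then J_offdiag (sq N) (of_nat i) * g (i - 1) else 0))"
    using i by (intro sum.cong) (auto simp: J_mat_entry add.commute)
  also have "\<dots> = J_diag (sq N) (of_nat i) * g i
      + (if i + 1 < N then J_offdiag (sq N) (of_nat i + 1) * g (i + 1) else 0)
      + (if 0 < i then J_offdiag (sq N) (of_nat i) * g (i - 1) else 0)"
    using i by (simp add: sum.distrib)
  also have "\<dots> = J_offdiag (sq N) (of_nat i) * g (i - 1) + J_diag (sq N) (of_nat i) * g i
     + J_offdiag (sq N) (of_nat i + 1) * g (i + 1)"
  proof -
    have "\<not> i + 1 < N \<Longrightarrow> of_nat i + 1 = (of_nat N :: complex)"
      using i by (metis Suc_eq_plus1 linorder_neqE_nat not_less_eq of_nat_Suc add.commute)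
    then show ?thesis by (auto simp: J_offdiag_def)
  qed
  finally show ?thesis .
qed

definition signed_binomial_mat :: "nat \<Rightarrow> complex mat" where
  "signed_binomial_mat N = mat N N (\<lambda>(j, k). of_nat (j choose k) * (-1) ^ k)"

lemma signed_binomial_mat_carrier: "signed_binomial_mat N \<in> carrier_mat N N"
  by (simp add: signed_binomial_mat_def)

lemma Psi_mult_Lambda: "Psi_mat N * Lambda_mat N = signed_binomial_mat N"
proof (rule eq_matI)
  fix j k assume "j < dim_row (signed_binomial_mat N)" "k < dim_col (signed_binomial_mat N)"
  then have "j < N" "k < N" by (simp_all add: signed_binomial_mat_def)
  then show "(Psi_mat N * Lambda_mat N) $$ (j, k) = signed_binomial_mat N $$ (j, k)"
    by (simp add: Psi_mat_def Lambda_mat_def signed_binomial_mat_def scalar_prod_def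
        if_distrib[of "\<lambda>y. _ * y"] cong: if_cong)
qed (simp_all add: Psi_mat_def Lambda_mat_def signed_binomial_mat_def)

lemma det_signed_binomial_mat: "det (signed_binomial_mat N) \<noteq> 0"
proof -
  have "det (signed_binomial_mat N) = prod_list (diag_mat (signed_binomial_mat N))"
    by (rule det_lower_triangular[OF _ signed_binomial_mat_carrier])
      (simp add: signed_binomial_mat_def)
  moreover have "0 \<notin> set (diag_mat (signed_binomial_mat N))"
    by (auto simp: diag_mat_def signed_binomial_mat_def)
  ultimately show ?thesis by simp
qed

lemma J_mult_signed_binomial_entry:
  assumes i: "i < N" and k: "k < N"
  defines "x \<equiv> of_nat i :: complex"
  shows "(J_mat N * signed_binomial_mat N) $$ (i, k) = (-1) ^ k *
      (J_offdiag (sq N) x * ((x - 1) gchoose k) + J_diag (sq N) x * (x gchoose k)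
       + J_offdiag (sq N) (x + 1) * ((x + 1) gchoose k))"
proof -
  have "(J_mat N * signed_binomial_mat N) $$ (i, k)
      = (\<Sum>l = 0..<N. J_mat N $$ (i, l) * ((of_nat l gchoose k) * (-1) ^ k))"
    using i k J_mat_carrier[of N]
    by (auto simp: scalar_prod_def signed_binomial_mat_def binomial_gbinomial intro!: sum.cong)
  also have "\<dots> = J_offdiag (sq N) (of_nat i) * ((of_nat (i - 1) gchoose k) * (-1) ^ k)
      + J_diag (sq N) (of_nat i) * ((of_nat i gchoose k) * (-1) ^ k)
      + J_offdiag (sq N) (of_nat i + 1) * ((of_nat (i + 1) gchoose k) * (-1) ^ k)"
    by (rule J_mat_row_sum[OF i])
  also have "\<dots> = (-1) ^ k *
      (J_offdiag (sq N) x * ((x - 1) gchoose k) + J_diag (sq N) x * (x gchoose k)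
       + J_offdiag (sq N) (x + 1) * ((x + 1) gchoose k))"
    using J_offdiag_mult_pred[of "sq N" i "\<lambda>y. (y gchoose k) * (-1) ^ k"]
    by (simp add: x_def algebra_simps)
  finally show ?thesis .
qed

lemma signed_binomial_mult_J_entry:
  assumes i: "i < N" and k: "k < N"
  defines "x \<equiv> of_nat i :: complex"
  shows "(signed_binomial_mat N * J_mat N) $$ (i, k) = (-1) ^ k *
      (J_diag (sq N) (of_nat k) * (x gchoose k) - J_offdiag (sq N) (of_nat k) * (x gchoose (k - 1))
       - J_offdiag (sq N) (of_nat k + 1) * (x gchoose (k + 1)))"
proof -
  have "(signed_binomial_mat N * J_mat N) $$ (i, k)
      = (\<Sum>l = 0..<N. J_mat N $$ (k, l) * ((x gchoose l) * (-1) ^ l))"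
    using i k J_mat_carrier[of N]
    by (auto simp: scalar_prod_def signed_binomial_mat_def binomial_gbinomial x_def
        J_mat_symmetric intro!: sum.cong)
  also have "\<dots> = J_offdiag (sq N) (of_nat k) * ((x gchoose (k - 1)) * (-1) ^ (k - 1))
      + J_diag (sq N) (of_nat k) * ((x gchoose k) * (-1) ^ k)
      + J_offdiag (sq N) (of_nat k + 1) * ((x gchoose (k + 1)) * (-1) ^ (k + 1))"
    by (rule J_mat_row_sum[OF k])
  also have "\<dots> = (-1) ^ k *
      (J_diag (sq N) (of_nat k) * (x gchoose k) - J_offdiag (sq N) (of_nat k) * (x gchoose (k - 1))
       - J_offdiag (sq N) (of_nat k + 1) * (x gchoose (k + 1)))"
    by (cases k) (simp_all add: algebra_simps)
  finally show ?thesis .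
qed

lemma J_signed_binomial_anticommute:
  "J_mat N * signed_binomial_mat N + signed_binomial_mat N * J_mat N
     = (sq N - 1) \<cdot>\<^sub>m signed_binomial_mat N"
proof (rule eq_matI)
  fix i k
  assume "i < dim_row ((sq N - 1) \<cdot>\<^sub>m signed_binomial_mat N)"
    and "k < dim_col ((sq N - 1) \<cdot>\<^sub>m signed_binomial_mat N)"
  then have i: "i < N" and k: "k < N" by (simp_all add: signed_binomial_mat_def)
  define x :: complex where "x = of_nat i"
  have combine: "t * a + t * (b - d - e) = t * c" if "a + b = c + d + e" for t a b c d e :: complex
    using that by Groebner_Basis.algebra
  have "(J_mat N * signed_binomial_mat N + signed_binomial_mat N * J_mat N) $$ (i, k)
      = (J_mat N * signed_binomial_mat N) $$ (i, k) + (signed_binomial_mat N * J_mat N) $$ (i, k)"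
    using i k by (simp add: carrier_matD[OF J_mat_carrier] carrier_matD[OF signed_binomial_mat_carrier])
  also have "\<dots> = (-1) ^ k * ((sq N - 1) * (x gchoose k))"
    using combine[OF gbinomial_J_anticommute[of "sq N" x k], of "(-1) ^ k"]
    unfolding J_mult_signed_binomial_entry[OF i k] signed_binomial_mult_J_entry[OF i k] x_def .
  also have "\<dots> = ((sq N - 1) \<cdot>\<^sub>m signed_binomial_mat N) $$ (i, k)"
    using i k by (simp add: signed_binomial_mat_def binomial_gbinomial x_def)
  finally show "(J_mat N * signed_binomial_mat N + signed_binomial_mat N * J_mat N) $$ (i, k)
      = ((sq N - 1) \<cdot>\<^sub>m signed_binomial_mat N) $$ (i, k)" .
qed (use J_mat_carrier[of N] in \<open>simp_all add: signed_binomial_mat_def\<close>)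

theorem mainTheorem9:
  fixes N :: nat and v :: "complex vec" and lam :: complex
  assumes "N \<ge> 1"
    and "eigenvector (J_mat N) v lam"
  shows "eigenvector (J_mat N) ((Psi_mat N * Lambda_mat N) *\<^sub>v v) (of_nat N ^ 2 - 1 - lam)
       \<and> (\<forall>\<mu>. eigenvalue (J_mat N) \<mu> \<longleftrightarrow> eigenvalue (J_mat N) (of_nat N ^ 2 - 1 - \<mu>))"
proof
  show "eigenvector (J_mat N) ((Psi_mat N * Lambda_mat N) *\<^sub>v v) (of_nat N ^ 2 - 1 - lam)"
    unfolding Psi_mult_Lambda
    by (rule eigenvector_mult_vec_anticommuting[OF J_mat_carrier signed_binomial_mat_carrier
        det_signed_binomial_mat J_signed_binomial_anticommute assms(2)])
  show "\<forall>\<mu>. eigenvalue (J_mat N) \<mu> \<longleftrightarrow> eigenvalue (J_mat N) (of_nat N ^ 2 - 1 - \<mu>)"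
    using eigenvalue_reflect_iff_anticommuting[OF J_mat_carrier signed_binomial_mat_carrier
        det_signed_binomial_mat J_signed_binomial_anticommute] by blast
qed

end
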